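(* Let $b\ge1$ and let $A\subseteq\mathbb{N}$ be a nonempty finite set, and let $f\in\mathcal{M}^b$ be the multiset with set-array representation $(A,\emptyset,\ldots,\emptyset)$ (i.e. $f$ is the indicator function of $A$). Then \[d(f)=\sum_{B\text{ divisor of }A}b^{|B|}.\]
   Context: $\mathbb{N}=\{0,1,\ldots\}$. A set $B\subseteq\mathbb{N}$ is a divisor of $A$ if $B+C=A$ for some $C\subseteq\mathbb{N}$, where $S+T=\{s+t:s\in S,t\in T\}$. $\mathcal{M}^b$ is the set of finitely supported functions $f:\mathbb{N}\to\{0,\ldots,b\}$; its set-array representation is $(A_1,\ldots,A_b)$ with $A_i=\{a:f(a)\ge i\}$. Multiset addition is coordinatewise on set arrays, with $S+\emptyset=\emptyset$. $g\in\mathcal{M}^b$ is a divisor of $f$ if $f=g+h$ for some $h\in\mathcal{M}^b$, and $d(f)$ is the number of divisors of $f$. *)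

theory Defs
  imports Main
begin

definition sumset :: "nat set \<Rightarrow> nat set \<Rightarrow> nat set" where
  "sumset S T = {s + t | s t. s \<in> S \<and> t \<in> T}"

definition set_divisor :: "nat set \<Rightarrow> nat set \<Rightarrow> bool" where
  "set_divisor B A \<longleftrightarrow> (\<exists>C. sumset B C = A)"

definition Mb :: "nat \<Rightarrow> (nat \<Rightarrow> nat) set" where
  "Mb b = {f. finite {a. f a \<noteq> 0} \<and> (\<forall>a. f a \<le> b)}"

definition setarr :: "(nat \<Rightarrow> nat) \<Rightarrow> nat \<Rightarrow> nat set" where
  "setarr f i = {a. f a \<ge> i}"

text \<open>Multiset addition is coordinatewise sumset on set arrays; g divides f in M^b
  iff f = g + h for some h in M^b.\<close>
definition mdivisor :: "nat \<Rightarrow> (nat \<Rightarrow> nat) \<Rightarrow> (nat \<Rightarrow> nat) \<Rightarrow> bool" where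
  "mdivisor b g f \<longleftrightarrow> g \<in> Mb b \<and>
     (\<exists>h \<in> Mb b. \<forall>i \<in> {1..b}. setarr f i = sumset (setarr g i) (setarr h i))"

definition num_divisors :: "nat \<Rightarrow> (nat \<Rightarrow> nat) \<Rightarrow> nat" where
  "num_divisors b f = card {g. mdivisor b g f}"

end

theory Submission
  imports Defs "HOL-Library.FuncSet"
begin

text \<open>A multiset g divides the indicator f of A exactly when its support divides A as a set:
  the first coordinate of f = g + h says supp g + C = A, and conversely, given such a C,
  the indicator h of C is a cofactor, because every higher set of h is empty and
  S + \<emptyset> = \<emptyset> makes the higher coordinates of g + h vanish just as those of f do.
  So the divisors of f are the functions bounded by b whose support is a set divisor B of A,
  and for each B there are b^|B| of them (one value in {1..b} per element of B).\<close>

lemma sumset_empty_right [simp]: "sumset S {} = {}"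
  by (simp add: sumset_def)

lemma sumset_empty_left [simp]: "sumset {} S = {}"
  by (simp add: sumset_def)

lemma sumset_factors_subset_atMost:
  assumes "sumset B C = A" "finite A" "A \<noteq> {}"
  shows "B \<subseteq> {..Max A}" "C \<subseteq> {..Max A}"
proof -
  obtain b c where "b \<in> B" "c \<in> C"
    using assms(1,3) by (auto simp: sumset_def)
  have "x + c \<in> A" if "x \<in> B" for x
    using assms(1) that \<open>c \<in> C\<close> by (auto simp: sumset_def)
  moreover have "b + y \<in> A" if "y \<in> C" for y
    using assms(1) that \<open>b \<in> B\<close> by (auto simp: sumset_def)
  ultimately show "B \<subseteq> {..Max A}" "C \<subseteq> {..Max A}"
    by (force dest: Max_ge[OF assms(2)])+
qed

lemma finite_sumset_factors:
  assumes "sumset B C = A" "finite A" "A \<noteq> {}"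
  shows "finite B" "finite C"
  using sumset_factors_subset_atMost[OF assms] finite_subset by blast+

lemma finite_set_divisors:
  assumes "finite A" "A \<noteq> {}"
  shows "finite {B. set_divisor B A}"
proof (rule finite_subset)
  show "{B. set_divisor B A} \<subseteq> Pow {..Max A}"
    using sumset_factors_subset_atMost(1)[OF _ assms] by (auto simp: set_divisor_def)
qed simp

lemma setarr_one: "setarr g 1 = {a. g a \<noteq> 0}"
  by (auto simp: setarr_def)

lemma setarr_indicator:
  "setarr (\<lambda>a. if a \<in> A then 1 else 0) i = (if i = 0 then UNIV else if i = 1 then A else {})"
  by (auto simp: setarr_def)

lemma mdivisor_indicator_iff:
  assumes "b \<ge> 1" "finite A" "A \<noteq> {}"
  shows "mdivisor b g (\<lambda>a. if a \<in> A then 1 else 0) \<longleftrightarrow>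
           (\<forall>a. g a \<le> b) \<and> set_divisor {a. g a \<noteq> 0} A"
    (is "mdivisor b g ?f \<longleftrightarrow> _")
proof
  assume "mdivisor b g ?f"
  then obtain h where "g \<in> Mb b" "setarr ?f 1 = sumset (setarr g 1) (setarr h 1)"
    using assms(1) by (auto simp: mdivisor_def)
  then have "\<forall>a. g a \<le> b" "sumset {a. g a \<noteq> 0} (setarr h 1) = A"
    by (simp_all only: Mb_def mem_Collect_eq setarr_one setarr_indicator) auto
  then show "(\<forall>a. g a \<le> b) \<and> set_divisor {a. g a \<noteq> 0} A"
    by (auto simp: set_divisor_def)
next
  assume bounded_divisor: "(\<forall>a. g a \<le> b) \<and> set_divisor {a. g a \<noteq> 0} A"
  then obtain C where C: "sumset {a. g a \<noteq> 0} C = A"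
    by (auto simp: set_divisor_def)
  define h where "h = (\<lambda>a. if a \<in> C then 1 else (0::nat))"
  have "g \<in> Mb b" "h \<in> Mb b"
    using bounded_divisor finite_sumset_factors[OF C assms(2,3)] assms(1)
    by (auto simp: Mb_def h_def)
  moreover have "setarr ?f i = sumset (setarr g i) (setarr h i)" if "i \<in> {1..b}" for i
  proof (cases "i = 1")
    case True
    then show ?thesis
      using C unfolding h_def setarr_indicator by (simp only: setarr_one) simp
  next
    case False
    with that show ?thesis
      unfolding h_def setarr_indicator by simp
  qed
  ultimately show "mdivisor b g ?f"
    by (auto simp: mdivisor_def)
qed

definition exact_support_funs :: "nat \<Rightarrow> 'a set \<Rightarrow> ('a \<Rightarrow> nat) set" where
  "exact_support_funs b B = {g. {a. g a \<noteq> 0} = B \<and> (\<forall>a. g a \<le> b)}"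

lemma inj_on_restrict_exact_support_funs:
  "inj_on (\<lambda>g. restrict g B) (exact_support_funs b B)"
proof (rule inj_onI)
  fix g g' assume "g \<in> exact_support_funs b B" "g' \<in> exact_support_funs b B"
    and "restrict g B = restrict g' B"
  then have "g a = g' a" for a
    by (cases "a \<in> B") (auto simp: exact_support_funs_def dest: fun_cong[of _ _ a])
  then show "g = g'" ..
qed

lemma bij_betw_restrict_exact_support_funs:
  "bij_betw (\<lambda>g. restrict g B) (exact_support_funs b B) (B \<rightarrow>\<^sub>E {1..b})"
proof (rule bij_betw_imageI[OF inj_on_restrict_exact_support_funs], intro equalityI subsetI)
  fix k assume "k \<in> (\<lambda>g. restrict g B) ` exact_support_funs b B"
  then show "k \<in> B \<rightarrow>\<^sub>E {1..b}"
    by (auto simp: exact_support_funs_def Suc_le_eq)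
next
  fix k assume k: "k \<in> B \<rightarrow>\<^sub>E {1..b}"
  define g where "g a = (if a \<in> B then k a else 0)" for a
  have "g \<in> exact_support_funs b B"
    using k by (force simp: exact_support_funs_def g_def)
  moreover have "k = restrict g B"
    using k by (auto simp: g_def restrict_def PiE_def extensional_def)
  ultimately show "k \<in> (\<lambda>g. restrict g B) ` exact_support_funs b B"
    by blast
qed

lemma card_exact_support_funs:
  assumes "finite B"
  shows "card (exact_support_funs b B) = b ^ card B"
proof -
  have "card (exact_support_funs b B) = card (B \<rightarrow>\<^sub>E {1..b})"
    by (rule bij_betw_same_card[OF bij_betw_restrict_exact_support_funs])
  also have "\<dots> = b ^ card B"
    using assms by (simp add: card_PiE)
  finally show ?thesis .
qed

lemma finite_exact_support_funs:
  assumes "finite B"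
  shows "finite (exact_support_funs b B)"
proof -
  have "finite (B \<rightarrow>\<^sub>E {1..b})"
    using assms by (simp add: finite_PiE)
  then show ?thesis
    by (simp only: bij_betw_finite[OF bij_betw_restrict_exact_support_funs])
qed

theorem mainTheorem12:
  fixes b :: nat and A :: "nat set"
  assumes "b \<ge> 1" and "finite A" and "A \<noteq> {}"
  shows "num_divisors b (\<lambda>a. if a \<in> A then 1 else 0)
           = (\<Sum>B\<in>{B. set_divisor B A}. b ^ card B)"
proof -
  let ?D = "{B. set_divisor B A}"
  have finite_divisor: "finite B" if "B \<in> ?D" for B
    using that finite_sumset_factors(1)[OF _ assms(2,3)] by (auto simp: set_divisor_def)
  have "{g. mdivisor b g (\<lambda>a. if a \<in> A then 1 else 0)} = (\<Union>B\<in>?D. exact_support_funs b B)"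
    by (auto simp: mdivisor_indicator_iff[OF assms] exact_support_funs_def)
  then have "num_divisors b (\<lambda>a. if a \<in> A then 1 else 0)
               = card (\<Union>B\<in>?D. exact_support_funs b B)"
    by (simp add: num_divisors_def)
  also have "\<dots> = (\<Sum>B\<in>?D. card (exact_support_funs b B))"
    using finite_set_divisors[OF assms(2,3)] finite_exact_support_funs[OF finite_divisor]
    by (intro card_UN_disjoint) (auto simp: exact_support_funs_def)
  also have "\<dots> = (\<Sum>B\<in>?D. b ^ card B)"
    using finite_divisor card_exact_support_funs by (intro sum.cong) auto
  finally show ?thesis .
qed

end
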